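(* In system $\mathscr{E}$: let $\Phi\triangleright\Gamma\vdash^{(b,e,m,f)}t\{x/u\}:\sigma$. Then there exist derivations $\Phi_t,\Phi_u$, integers $b_t,b_u,e_t,e_u,m_t,m_u,f_t,f_u$, contexts $\Gamma_t,\Gamma_u$ and a multi-type $\mathcal{A}$ such that $\Phi_t\triangleright\Gamma_t;x:\mathcal{A}\vdash^{(b_t,e_t,m_t,f_t)}t:\sigma$, $\Phi_u\triangleright\Gamma_u\vdash^{(b_u,e_u,m_u,f_u)}u:\mathcal{A}$, $b=b_t+b_u$, $e=e_t+e_u$, $m=m_t+m_u$, $f=f_t+f_u$, and $\Gamma=\Gamma_t\wedge\Gamma_u$.
   Context: Pair pattern calculus: patterns $p,q ::= x\mid\langle p,q\rangle$ (linear); $\mathrm{var}(p)$ = variables of $p$; $p\# q$ means disjoint variables. Terms $t,u ::= x\mid\lambda p.t\mid\langle t,u\rangle\mid t\,u\mid t[p/u]$, $\mathrm{var}(p)$ bound in $t$ in $\lambda p.t$ and $t[p/u]$; terms modulo $\alpha$; $t\{x/u\}$ capture-avoiding substitution. System $\mathscr{E}$. Types: tight types $\mathtt{t} ::= \bullet_{\mathcal{N}}\mid\bullet_{\mathcal{M}}$; types $\sigma ::= \mathtt{t}\mid \mathcal{A}_1\times\mathcal{A}_2\mid \mathcal{A}\to\sigma$; multi-types $\mathcal{A} ::= [\sigma_k]_{k\in K}$ (finite, possibly empty $[\,]$). Contexts map variables to multi-types, $\mathrm{dom}(\Gamma)$ = variables with non-empty multi-type; $\Gamma;x:\mathcal{A}$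 extends $\Gamma$ ($x\notin\mathrm{dom}(\Gamma)$) by $x:\mathcal{A}$; $\wedge$ pointwise multiset union; $\Gamma|_p$ restriction to $\mathrm{var}(p)$; $\Gamma\setminus\mathrm{var}(p)$ removal. $\mathrm{tight}(\sigma)$ iff $\sigma\in\{\bullet_{\mathcal{N}},\bullet_{\mathcal{M}}\}$, extended elementwise. Rules: (pat_v) $x:\mathcal{A}\Vdash^{(1,0,0)} x:\mathcal{A}$. (pat_×) from $\Gamma\Vdash^{(e_p,m_p,f_p)}p:\mathcal{A}$, $\Delta\Vdash^{(e_q,m_q,f_q)}q:\mathcal{B}$, $p\#q$ infer $\Gamma\wedge\Delta\Vdash^{(e_p+e_q,1+m_p+m_q,f_p+f_q)}\langle p,q\rangle:[\mathcal{A}\times\mathcal{B}]$. (pat_p) if $\mathrm{dom}(\Gamma)\subseteq\mathrm{var}(\langle p,q\rangle)$ and $\mathrm{tight}(\Gamma)$ then $\Gamma\Vdash^{(0,0,1)}\langle p,q\rangle:[\bullet_{\mathcal{N}}]$. (ax) $x:[\sigma]\vdash^{(0,0,0,0)}x:\sigma$. (abs) from $\Gamma\vdash^{(b,e,m,f)}t:\sigma$ and $\Gamma|_p\Vdash^{(e_p,m_p,f_p)}p:\mathcal{A}$ infer $\Gamma\setminus\mathrm{var}(p)\vdash^{(b+1,e+e_p,m+m_p,f+f_p)}\lambda p.t:\mathcal{A}\to\sigma$. (abs_p) from $\Gamma\vdash^{(b,e,m,f)}t:\mathtt{t}$ ($\mathtt{t}$ tight) and $\mathrm{tight}(\Gamma|_p)$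 infer $\Gamma\setminus\mathrm{var}(p)\vdash^{(b,e,m,f+1)}\lambda p.t:\bullet_{\mathcal{M}}$. (many) from $(\Gamma_k\vdash^{(b_k,e_k,m_k,f_k)}t:\sigma_k)_{k\in K}$ infer $\wedge_k\Gamma_k\vdash^{(\sum b_k,\sum e_k,\sum m_k,\sum f_k)}t:[\sigma_k]_{k\in K}$. (app) from $\Gamma\vdash^{(b_t,e_t,m_t,f_t)}t:\mathcal{A}\to\sigma$, $\Delta\vdash^{(b_u,e_u,m_u,f_u)}u:\mathcal{A}$ infer $\Gamma\wedge\Delta\vdash^{(b_t+b_u,e_t+e_u,m_t+m_u,f_t+f_u)}t\,u:\sigma$. (app_p) from $\Gamma\vdash^{(b,e,m,f)}t:\bullet_{\mathcal{N}}$ infer $\Gamma\vdash^{(b,e,m,f+1)}t\,u:\bullet_{\mathcal{N}}$. (pair) from $\Gamma\vdash^{(b_t,e_t,m_t,f_t)}t:\mathcal{A}$, $\Delta\vdash^{(b_u,e_u,m_u,f_u)}u:\mathcal{B}$ infer $\Gamma\wedge\Delta\vdash^{(b_t+b_u,e_t+e_u,m_t+m_u,f_t+f_u)}\langle t,u\rangle:\mathcal{A}\times\mathcal{B}$. (pair_p) $\vdash^{(0,0,0,1)}\langle t,u\rangle:\bullet_{\mathcal{M}}$. (match) from $\Gamma\vdash^{(b_t,e_t,m_t,f_t)}t:\sigma$, $\Gamma|_p\Vdash^{(e_p,m_p,f_p)}p:\mathcal{A}$, $\Delta\vdash^{(b_u,e_u,m_u,f_u)}u:\mathcal{A}$ infer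 $(\Gamma\setminus\mathrm{var}(p))\wedge\Delta\vdash^{(b_t+b_u,e_t+e_u+e_p,m_t+m_u+m_p,f_t+f_u+f_p)}t[p/u]:\sigma$. *)

theory Defs
  imports Main "HOL-Library.Multiset"
begin

type_synonym var = nat

datatype pat = PVar var | PPair pat pat

datatype trm = Var var | Lam pat trm | Pair trm trm | App trm trm
  | Sub trm pat trm  (* Sub t p u  represents  t[p/u] *)

fun pvars :: "pat \<Rightarrow> var set" where
  "pvars (PVar x) = {x}"
| "pvars (PPair p q) = pvars p \<union> pvars q"

fun linear :: "pat \<Rightarrow> bool" where
  "linear (PVar x) = True"
| "linear (PPair p q) = (linear p \<and> linear q \<and> pvars p \<inter> pvars q = {})"

fun wf_trm :: "trm \<Rightarrow> bool" where
  "wf_trm (Var x) = True"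
| "wf_trm (Lam p t) = (linear p \<and> wf_trm t)"
| "wf_trm (Pair t u) = (wf_trm t \<and> wf_trm u)"
| "wf_trm (App t u) = (wf_trm t \<and> wf_trm u)"
| "wf_trm (Sub t p u) = (wf_trm t \<and> linear p \<and> wf_trm u)"

fun fv :: "trm \<Rightarrow> var set" where
  "fv (Var x) = {x}"
| "fv (Lam p t) = fv t - pvars p"
| "fv (Pair t u) = fv t \<union> fv u"
| "fv (App t u) = fv t \<union> fv u"
| "fv (Sub t p u) = (fv t - pvars p) \<union> fv u"

fun bv :: "trm \<Rightarrow> var set" where
  "bv (Var x) = {}"
| "bv (Lam p t) = pvars p \<union> bv t"
| "bv (Pair t u) = bv t \<union> bv u"
| "bv (App t u) = bv t \<union> bv u"
| "bv (Sub t p u) = bv t \<union> pvars p \<union> bv u"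

(* substitution t{x/u}; it is capture-avoiding whenever bv t \<inter> fv u = {} *)
fun subst :: "trm \<Rightarrow> var \<Rightarrow> trm \<Rightarrow> trm" where
  "subst (Var y) x u = (if y = x then u else Var y)"
| "subst (Lam p t) x u = (if x \<in> pvars p then Lam p t else Lam p (subst t x u))"
| "subst (Pair t1 t2) x u = Pair (subst t1 x u) (subst t2 x u)"
| "subst (App t1 t2) x u = App (subst t1 x u) (subst t2 x u)"
| "subst (Sub t p t2) x u =
     Sub (if x \<in> pvars p then t else subst t x u) p (subst t2 x u)"

(* types: TN = tight N, TM = tight M; multi-types are ty multisets *)
datatype ty = TN | TM | Prod "ty multiset" "ty multiset" | Arr "ty multiset" ty

type_synonym ctx = "var \<Rightarrow> ty multiset"

definition empty_ctx :: ctx where "empty_ctx = (\<lambda>_. {#})"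

definition single_ctx :: "var \<Rightarrow> ty multiset \<Rightarrow> ctx" where
  "single_ctx x A = (\<lambda>y. if y = x then A else {#})"

definition ctx_union :: "ctx \<Rightarrow> ctx \<Rightarrow> ctx" (infixl "\<and>\<^sub>c" 65) where
  "ctx_union G D = (\<lambda>y. G y + D y)"

definition ctx_dom :: "ctx \<Rightarrow> var set" where
  "ctx_dom G = {y. G y \<noteq> {#}}"

definition restrict :: "ctx \<Rightarrow> pat \<Rightarrow> ctx" where
  "restrict G p = (\<lambda>y. if y \<in> pvars p then G y else {#})"

definition remove :: "ctx \<Rightarrow> pat \<Rightarrow> ctx" where
  "remove G p = (\<lambda>y. if y \<in> pvars p then {#} else G y)"

(* G;x:A, defined only when x \<notin> dom G *)
definition ctx_ext :: "ctx \<Rightarrow> var \<Rightarrow> ty multiset \<Rightarrow> ctx" where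
  "ctx_ext G x A = G(x := A)"

definition tight_ty :: "ty \<Rightarrow> bool" where
  "tight_ty s \<longleftrightarrow> s = TN \<or> s = TM"

definition tight_ctx :: "ctx \<Rightarrow> bool" where
  "tight_ctx G \<longleftrightarrow> (\<forall>y. \<forall>s\<in>#G y. tight_ty s)"

inductive pderiv :: "ctx \<Rightarrow> pat \<Rightarrow> ty multiset \<Rightarrow> nat \<Rightarrow> nat \<Rightarrow> nat \<Rightarrow> bool" where
  pat_v: "pderiv (single_ctx x A) (PVar x) A 1 0 0"
| pat_pair: "\<lbrakk>pderiv G p A ep mp fp; pderiv D q B eq mq fq; pvars p \<inter> pvars q = {}\<rbrakk>
    \<Longrightarrow> pderiv (G \<and>\<^sub>c D) (PPair p q) {#Prod A B#} (ep + eq) (1 + mp + mq) (fp + fq)"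
| pat_p: "\<lbrakk>ctx_dom G \<subseteq> pvars (PPair p q); tight_ctx G\<rbrakk>
    \<Longrightarrow> pderiv G (PPair p q) {#TN#} 0 0 1"

inductive tderiv :: "ctx \<Rightarrow> trm \<Rightarrow> ty \<Rightarrow> nat \<Rightarrow> nat \<Rightarrow> nat \<Rightarrow> nat \<Rightarrow> bool"
  and mderiv :: "ctx \<Rightarrow> trm \<Rightarrow> ty multiset \<Rightarrow> nat \<Rightarrow> nat \<Rightarrow> nat \<Rightarrow> nat \<Rightarrow> bool" where
  ax: "tderiv (single_ctx x {#s#}) (Var x) s 0 0 0 0"
| abs: "\<lbrakk>tderiv G t s b e m f; pderiv (restrict G p) p A ep mp fp\<rbrakk>
    \<Longrightarrow> tderiv (remove G p) (Lam p t) (Arr A s) (b + 1) (e + ep) (m + mp) (f + fp)"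
| abs_p: "\<lbrakk>tderiv G t s b e m f; tight_ty s; tight_ctx (restrict G p)\<rbrakk>
    \<Longrightarrow> tderiv (remove G p) (Lam p t) TM b e m (f + 1)"
| app: "\<lbrakk>tderiv G t (Arr A s) bt et mt ft; mderiv D u A bu eu mu fu\<rbrakk>
    \<Longrightarrow> tderiv (G \<and>\<^sub>c D) (App t u) s (bt + bu) (et + eu) (mt + mu) (ft + fu)"
| app_p: "tderiv G t TN b e m f \<Longrightarrow> tderiv G (App t u) TN b e m (f + 1)"
| pair: "\<lbrakk>mderiv G t A bt et mt ft; mderiv D u B bu eu mu fu\<rbrakk>
    \<Longrightarrow> tderiv (G \<and>\<^sub>c D) (Pair t u) (Prod A B) (bt + bu) (et + eu) (mt + mu) (ft + fu)"
| pair_p: "tderiv empty_ctx (Pair t u) TM 0 0 0 1"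
| match: "\<lbrakk>tderiv G t s bt et mt ft; pderiv (restrict G p) p A ep mp fp; mderiv D u A bu eu mu fu\<rbrakk>
    \<Longrightarrow> tderiv (remove G p \<and>\<^sub>c D) (Sub t p u) s (bt + bu) (et + eu + ep) (mt + mu + mp) (ft + fu + fp)"
| many_empty: "mderiv empty_ctx t {#} 0 0 0 0"
| many_add: "\<lbrakk>tderiv G t s b e m f; mderiv D t A b' e' m' f'\<rbrakk>
    \<Longrightarrow> mderiv (G \<and>\<^sub>c D) t (add_mset s A) (b + b') (e + e') (m + m') (f + f')"

end

theory Submission
  imports Defs
begin

(*
  Induction on t, inverting the last rule of the derivation of t{x/u}. Every
  subderivation typing an occurrence of u with some sigma is turned into an axiom
  x : [sigma], and these multi-types are summed into the multi-type A of x, while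
  the derivations of u are gathered into one derivation of u : A by rule many.
  All typing rules are additive in contexts and counters, so both split. Binders
  cause no trouble since bound variables of t are fresh for u: removing pattern
  variables from the context only affects the part coming from t.
*)

lemma ctx_union_empty [simp]: "G \<and>\<^sub>c empty_ctx = G" "empty_ctx \<and>\<^sub>c G = G"
  by (simp_all add: ctx_union_def empty_ctx_def)

lemma ctx_ext_union:
  "G x = {#} \<Longrightarrow> D x = {#} \<Longrightarrow> ctx_ext G x A \<and>\<^sub>c ctx_ext D x B = ctx_ext (G \<and>\<^sub>c D) x (A + B)"
  by (auto simp: ctx_ext_def ctx_union_def)

lemma ctx_dom_subset_fv:
  "tderiv G t s b e m f \<Longrightarrow> ctx_dom G \<subseteq> fv t"
  "mderiv G t A b e m f \<Longrightarrow> ctx_dom G \<subseteq> fv t"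
  by (induction rule: tderiv_mderiv.inducts)
     (auto simp: ctx_dom_def single_ctx_def remove_def ctx_union_def empty_ctx_def split: if_splits)

lemma mderiv_add:
  "mderiv G t A b e m f \<Longrightarrow> mderiv D t B b' e' m' f' \<Longrightarrow>
   mderiv (G \<and>\<^sub>c D) t (A + B) (b + b') (e + e') (m + m') (f + f')"
proof (induction rule: tderiv_mderiv.inducts(2)[where ?P1.0 = "\<lambda>_ _ _ _ _ _ _. True"])
  case (many_add G t s b e m f D1 A b1 e1 m1 f1)
  then have "mderiv (G \<and>\<^sub>c (D1 \<and>\<^sub>c D)) t (add_mset s (A + B))
      (b + (b1 + b')) (e + (e1 + e')) (m + (m1 + m')) (f + (f1 + f'))"
    by (intro tderiv_mderiv.many_add) auto
  moreover have "G \<and>\<^sub>c (D1 \<and>\<^sub>c D) = (G \<and>\<^sub>c D1) \<and>\<^sub>c D"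
    by (auto simp: ctx_union_def)
  ultimately show ?case
    by (simp add: add.assoc)
qed auto

text \<open>The judgement \<open>J\<close> of the unsubstituted term is a parameter, instantiated by
  \<open>\<lambda>\<Gamma>. tderiv \<Gamma> t\<close> and \<open>\<lambda>\<Gamma>. mderiv \<Gamma> t\<close>, so that term and multi-type judgements split alike.\<close>

definition anti_subst ::
  "(ctx \<Rightarrow> 'a \<Rightarrow> nat \<Rightarrow> nat \<Rightarrow> nat \<Rightarrow> nat \<Rightarrow> bool) \<Rightarrow> var \<Rightarrow> trm \<Rightarrow>
   ctx \<Rightarrow> 'a \<Rightarrow> nat \<Rightarrow> nat \<Rightarrow> nat \<Rightarrow> nat \<Rightarrow> bool" where
  "anti_subst J x u G s b e m f \<longleftrightarrow> (\<exists>Gt Gu A bt bu et eu mt mu ft fu.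
     Gt x = {#} \<and> J (ctx_ext Gt x A) s bt et mt ft \<and> mderiv Gu u A bu eu mu fu \<and>
     b = bt + bu \<and> e = et + eu \<and> m = mt + mu \<and> f = ft + fu \<and> G = Gt \<and>\<^sub>c Gu)"

lemma anti_substI:
  "Gt x = {#} \<Longrightarrow> J (ctx_ext Gt x A) s bt et mt ft \<Longrightarrow> mderiv Gu u A bu eu mu fu \<Longrightarrow>
   b = bt + bu \<Longrightarrow> e = et + eu \<Longrightarrow> m = mt + mu \<Longrightarrow> f = ft + fu \<Longrightarrow> G = Gt \<and>\<^sub>c Gu \<Longrightarrow>
   anti_subst J x u G s b e m f"
  unfolding anti_subst_def by blast

lemma anti_substE:
  assumes "anti_subst J x u G s b e m f"
  obtains Gt Gu A bt bu et eu mt mu ft fu where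
    "Gt x = {#}" "J (ctx_ext Gt x A) s bt et mt ft" "mderiv Gu u A bu eu mu fu"
    "b = bt + bu" "e = et + eu" "m = mt + mu" "f = ft + fu" "G = Gt \<and>\<^sub>c Gu"
  using assms unfolding anti_subst_def by blast

lemma anti_subst_trivial:
  assumes "J G s b e m f" and "G x = {#}"
  shows "anti_subst J x u G s b e m f"
proof (rule anti_substI[where J = J and Gt = G and Gu = empty_ctx and A = "{#}",
      OF \<open>G x = {#}\<close> _ tderiv_mderiv.many_empty])
  have "ctx_ext G x {#} = G"
    using \<open>G x = {#}\<close> by (auto simp: ctx_ext_def)
  with assms(1) show "J (ctx_ext G x {#}) s b e m f"
    by simp
qed simp_all

lemma anti_subst_unary:
  assumes "anti_subst J x u G s b e m f"
    and "\<And>\<Gamma> b e m f. J \<Gamma> s b e m f \<Longrightarrow> J' \<Gamma> s' (b + kb) (e + ke) (m + km) (f + kf)"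
  shows "anti_subst J' x u G s' (b + kb) (e + ke) (m + km) (f + kf)"
  using assms(1)
proof (rule anti_substE)
  fix Gt Gu A bt bu et eu mt mu ft fu
  assume "Gt x = {#}" "J (ctx_ext Gt x A) s bt et mt ft" "mderiv Gu u A bu eu mu fu"
    and "b = bt + bu" "e = et + eu" "m = mt + mu" "f = ft + fu" "G = Gt \<and>\<^sub>c Gu"
  then show ?thesis
    by (intro anti_substI[where J = J', OF _ assms(2)]) auto
qed

lemma anti_subst_binary:
  assumes "anti_subst J1 x u G1 s1 b1 e1 m1 f1" and "anti_subst J2 x u G2 s2 b2 e2 m2 f2"
    and "\<And>\<Gamma>1 \<Gamma>2 b1 e1 m1 f1 b2 e2 m2 f2.
           J1 \<Gamma>1 s1 b1 e1 m1 f1 \<Longrightarrow> J2 \<Gamma>2 s2 b2 e2 m2 f2 \<Longrightarrow>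
           J (\<Gamma>1 \<and>\<^sub>c \<Gamma>2) s (b1 + b2) (e1 + e2) (m1 + m2) (f1 + f2)"
  shows "anti_subst J x u (G1 \<and>\<^sub>c G2) s (b1 + b2) (e1 + e2) (m1 + m2) (f1 + f2)"
proof -
  obtain Gt1 Gu1 A1 bt1 bu1 et1 eu1 mt1 mu1 ft1 fu1 where 1:
    "Gt1 x = {#}" "J1 (ctx_ext Gt1 x A1) s1 bt1 et1 mt1 ft1" "mderiv Gu1 u A1 bu1 eu1 mu1 fu1"
    "b1 = bt1 + bu1" "e1 = et1 + eu1" "m1 = mt1 + mu1" "f1 = ft1 + fu1" "G1 = Gt1 \<and>\<^sub>c Gu1"
    using assms(1) by (rule anti_substE)
  obtain Gt2 Gu2 A2 bt2 bu2 et2 eu2 mt2 mu2 ft2 fu2 where 2: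
    "Gt2 x = {#}" "J2 (ctx_ext Gt2 x A2) s2 bt2 et2 mt2 ft2" "mderiv Gu2 u A2 bu2 eu2 mu2 fu2"
    "b2 = bt2 + bu2" "e2 = et2 + eu2" "m2 = mt2 + mu2" "f2 = ft2 + fu2" "G2 = Gt2 \<and>\<^sub>c Gu2"
    using assms(2) by (rule anti_substE)
  have "J (ctx_ext (Gt1 \<and>\<^sub>c Gt2) x (A1 + A2)) s (bt1 + bt2) (et1 + et2) (mt1 + mt2) (ft1 + ft2)"
    using assms(3)[OF 1(2) 2(2)] by (simp add: ctx_ext_union 1(1) 2(1))
  moreover have "(Gt1 \<and>\<^sub>c Gt2) x = {#}"
    using 1(1) 2(1) by (simp add: ctx_union_def)
  moreover have "G1 \<and>\<^sub>c G2 = (Gt1 \<and>\<^sub>c Gt2) \<and>\<^sub>c (Gu1 \<and>\<^sub>c Gu2)"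
    using 1(8) 2(8) by (auto simp: ctx_union_def)
  ultimately show ?thesis
    by (intro anti_substI[where J = J, OF _ _ mderiv_add[OF 1(3) 2(3)]])
      (simp_all add: 1(4-7) 2(4-7))
qed

text \<open>Keeping \<open>restrict \<Gamma>' p\<close> fixed keeps the pattern derivation of an abstraction or
  matching rule applicable after splitting.\<close>

definition discharge ::
  "(ctx \<Rightarrow> 'a \<Rightarrow> nat \<Rightarrow> nat \<Rightarrow> nat \<Rightarrow> nat \<Rightarrow> bool) \<Rightarrow> pat \<Rightarrow> ctx \<Rightarrow>
   ctx \<Rightarrow> 'a \<Rightarrow> nat \<Rightarrow> nat \<Rightarrow> nat \<Rightarrow> nat \<Rightarrow> bool" where
  "discharge J p G \<Gamma> s b e m f \<longleftrightarrow>
     (\<exists>\<Gamma>'. \<Gamma> = remove \<Gamma>' p \<and> restrict \<Gamma>' p = restrict G p \<and> J \<Gamma>' s b e m f)"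

lemma anti_subst_remove:
  assumes "anti_subst J x u G s b e m f" and "x \<notin> pvars p" and "pvars p \<inter> fv u = {}"
  shows "anti_subst (discharge J p G) x u (remove G p) s b e m f"
  using assms(1)
proof (rule anti_substE)
  fix Gt Gu A bt bu et eu mt mu ft fu
  assume split: "Gt x = {#}" "J (ctx_ext Gt x A) s bt et mt ft" "mderiv Gu u A bu eu mu fu"
    "b = bt + bu" "e = et + eu" "m = mt + mu" "f = ft + fu" "G = Gt \<and>\<^sub>c Gu"
  have "ctx_dom Gu \<inter> pvars p = {}"
    using ctx_dom_subset_fv(2)[OF split(3)] assms(3) by blast
  then have "\<And>y. y \<in> pvars p \<Longrightarrow> Gu y = {#}"
    by (auto simp: ctx_dom_def)
  with split(1,8) assms(2) have
    "ctx_ext (remove Gt p) x A = remove (ctx_ext Gt x A) p"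
    "restrict (ctx_ext Gt x A) p = restrict G p"
    "remove G p = remove Gt p \<and>\<^sub>c Gu"
    "remove Gt p x = {#}"
    by (auto simp: fun_eq_iff restrict_def remove_def ctx_ext_def ctx_union_def)
  with split show ?thesis
    by (intro anti_substI[where Gt = "remove Gt p" and Gu = Gu and A = A])
      (auto simp: discharge_def)
qed

lemma anti_subst_var:
  assumes "tderiv G u s b e m f"
  shows "anti_subst (\<lambda>\<Gamma>. tderiv \<Gamma> (Var x)) x u G s b e m f"
proof -
  have "ctx_ext empty_ctx x {#s#} = single_ctx x {#s#}"
    by (auto simp: fun_eq_iff ctx_ext_def empty_ctx_def single_ctx_def)
  then have "tderiv (ctx_ext empty_ctx x {#s#}) (Var x) s 0 0 0 0"
    by (simp add: tderiv_mderiv.ax)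
  moreover have "mderiv G u {#s#} b e m f"
    using tderiv_mderiv.many_add[OF assms tderiv_mderiv.many_empty] by simp
  moreover have "empty_ctx x = {#}"
    by (simp add: empty_ctx_def)
  ultimately show ?thesis
    by (intro anti_substI) auto
qed

lemma anti_subst_fresh:
  assumes "tderiv G t s b e m f" and "x \<notin> fv t"
  shows "anti_subst (\<lambda>\<Gamma>. tderiv \<Gamma> t) x u G s b e m f"
proof (rule anti_subst_trivial)
  show "G x = {#}"
    using ctx_dom_subset_fv(1)[OF assms(1)] assms(2) by (auto simp: ctx_dom_def)
qed (rule assms(1))

lemma anti_subst_mderiv:
  assumes "mderiv G v A b e m f"
    and "\<And>G s b e m f. tderiv G v s b e m f \<Longrightarrow> anti_subst (\<lambda>\<Gamma>. tderiv \<Gamma> t) x u G s b e m f"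
  shows "anti_subst (\<lambda>\<Gamma>. mderiv \<Gamma> t) x u G A b e m f"
  using assms
proof (induction rule: tderiv_mderiv.inducts(2)[where ?P1.0 = "\<lambda>_ _ _ _ _ _ _. True"])
  case many_empty
  show ?case
    by (rule anti_subst_trivial[where J = "\<lambda>\<Gamma>. mderiv \<Gamma> t", OF tderiv_mderiv.many_empty])
      (simp add: empty_ctx_def)
next
  case (many_add G v s b e m f D A b' e' m' f')
  have "anti_subst (\<lambda>\<Gamma>. tderiv \<Gamma> t) x u G s b e m f"
    using many_add.prems many_add.hyps(1) .
  moreover have "anti_subst (\<lambda>\<Gamma>. mderiv \<Gamma> t) x u D A b' e' m' f'"
    using many_add.IH many_add.prems .
  ultimately show ?case
    by (rule anti_subst_binary) (rule tderiv_mderiv.many_add)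
qed auto

inductive_cases tderiv_LamE [consumes 1, case_names abs abs_p]: "tderiv G (Lam p t) s b e m f"
inductive_cases tderiv_AppE [consumes 1, case_names app app_p]: "tderiv G (App t u) s b e m f"
inductive_cases tderiv_PairE [consumes 1, case_names pair pair_p]: "tderiv G (Pair t u) s b e m f"
inductive_cases tderiv_SubE [consumes 1, case_names match]: "tderiv G (Sub t p u) s b e m f"

lemma anti_subst_Lam:
  assumes IH: "\<And>G s b e m f. tderiv G (subst t x u) s b e m f \<Longrightarrow>
      anti_subst (\<lambda>\<Gamma>. tderiv \<Gamma> t) x u G s b e m f"
    and "pvars p \<inter> fv u = {}" and "tderiv G (subst (Lam p t) x u) s b e m f"
  shows "anti_subst (\<lambda>\<Gamma>. tderiv \<Gamma> (Lam p t)) x u G s b e m f"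
proof (cases "x \<in> pvars p")
  case True
  with assms(3) show ?thesis
    by (intro anti_subst_fresh) auto
next
  case False
  from assms(3) False have "tderiv G (Lam p (subst t x u)) s b e m f"
    by simp
  then show ?thesis
  proof (cases rule: tderiv_LamE)
    case (abs G' s' b' e' m' f' A ep mp fp)
    have "anti_subst (\<lambda>\<Gamma>. tderiv \<Gamma> (Lam p t)) x u (remove G' p) (Arr A s')
        (b' + 1) (e' + ep) (m' + mp) (f' + fp)"
      using anti_subst_remove[OF IH[OF abs(7)] False assms(2)]
      by (rule anti_subst_unary) (metis discharge_def tderiv_mderiv.abs abs(8))
    with abs show ?thesis
      by simp
  next
    case (abs_p G' s' f')
    have "anti_subst (\<lambda>\<Gamma>. tderiv \<Gamma> (Lam p t)) x u (remove G' p) TM (b + 0) (e + 0) (m + 0) (f' + 1)"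
      using anti_subst_remove[OF IH[OF abs_p(4)] False assms(2)]
      by (rule anti_subst_unary) (metis add_0_right discharge_def tderiv_mderiv.abs_p abs_p(5,6))
    with abs_p show ?thesis
      by simp
  qed
qed

lemma anti_subst_App:
  assumes IH1: "\<And>G s b e m f. tderiv G (subst t1 x u) s b e m f \<Longrightarrow>
      anti_subst (\<lambda>\<Gamma>. tderiv \<Gamma> t1) x u G s b e m f"
    and IH2: "\<And>G s b e m f. tderiv G (subst t2 x u) s b e m f \<Longrightarrow>
      anti_subst (\<lambda>\<Gamma>. tderiv \<Gamma> t2) x u G s b e m f"
    and "tderiv G (subst (App t1 t2) x u) s b e m f"
  shows "anti_subst (\<lambda>\<Gamma>. tderiv \<Gamma> (App t1 t2)) x u G s b e m f"
proof -
  from assms(3) have "tderiv G (App (subst t1 x u) (subst t2 x u)) s b e m f"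
    by simp
  then show ?thesis
  proof (cases rule: tderiv_AppE)
    case (app G1 A bt et mt ft D bu eu mu fu)
    have "anti_subst (\<lambda>\<Gamma>. mderiv \<Gamma> t2) x u D A bu eu mu fu"
      using app(7) IH2 by (rule anti_subst_mderiv)
    with IH1[OF app(6)] show ?thesis
      unfolding app by (rule anti_subst_binary) (rule tderiv_mderiv.app)
  next
    case (app_p f')
    have "anti_subst (\<lambda>\<Gamma>. tderiv \<Gamma> (App t1 t2)) x u G TN (b + 0) (e + 0) (m + 0) (f' + 1)"
      using IH1[OF app_p(3)]
      by (rule anti_subst_unary) (simp only: add_0_right tderiv_mderiv.app_p)
    with app_p show ?thesis
      by simp
  qed
qed

lemma anti_subst_Pair:
  assumes IH1: "\<And>G s b e m f. tderiv G (subst t1 x u) s b e m f \<Longrightarrow>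
      anti_subst (\<lambda>\<Gamma>. tderiv \<Gamma> t1) x u G s b e m f"
    and IH2: "\<And>G s b e m f. tderiv G (subst t2 x u) s b e m f \<Longrightarrow>
      anti_subst (\<lambda>\<Gamma>. tderiv \<Gamma> t2) x u G s b e m f"
    and "tderiv G (subst (Pair t1 t2) x u) s b e m f"
  shows "anti_subst (\<lambda>\<Gamma>. tderiv \<Gamma> (Pair t1 t2)) x u G s b e m f"
proof -
  from assms(3) have "tderiv G (Pair (subst t1 x u) (subst t2 x u)) s b e m f"
    by simp
  then show ?thesis
  proof (cases rule: tderiv_PairE)
    case (pair G1 A bt et mt ft D B bu eu mu fu)
    have "anti_subst (\<lambda>\<Gamma>. mderiv \<Gamma> t1) x u G1 A bt et mt ft"
      using pair(7) IH1 by (rule anti_subst_mderiv)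
    moreover have "anti_subst (\<lambda>\<Gamma>. mderiv \<Gamma> t2) x u D B bu eu mu fu"
      using pair(8) IH2 by (rule anti_subst_mderiv)
    ultimately show ?thesis
      unfolding pair by (rule anti_subst_binary) (rule tderiv_mderiv.pair)
  next
    case pair_p
    with tderiv_mderiv.pair_p[of t1 t2] show ?thesis
      by (intro anti_subst_trivial) (simp_all add: empty_ctx_def)
  qed
qed

lemma anti_subst_Sub:
  assumes IH1: "\<And>G s b e m f. tderiv G (subst t1 x u) s b e m f \<Longrightarrow>
      anti_subst (\<lambda>\<Gamma>. tderiv \<Gamma> t1) x u G s b e m f"
    and IH2: "\<And>G s b e m f. tderiv G (subst t2 x u) s b e m f \<Longrightarrow>
      anti_subst (\<lambda>\<Gamma>. tderiv \<Gamma> t2) x u G s b e m f"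
    and "pvars p \<inter> fv u = {}" and "tderiv G (subst (Sub t1 p t2) x u) s b e m f"
  shows "anti_subst (\<lambda>\<Gamma>. tderiv \<Gamma> (Sub t1 p t2)) x u G s b e m f"
proof -
  from assms(4) have
    "tderiv G (Sub (if x \<in> pvars p then t1 else subst t1 x u) p (subst t2 x u)) s b e m f"
    by simp
  then show ?thesis
  proof (cases rule: tderiv_SubE)
    case (match G1 bt et mt ft A ep mp fp D bu eu mu fu)
    have "anti_subst (discharge (\<lambda>\<Gamma>. tderiv \<Gamma> t1) p G1) x u (remove G1 p) s bt et mt ft"
    proof (cases "x \<in> pvars p")
      case True
      with match(6) show ?thesis
        by (intro anti_subst_trivial) (auto simp: discharge_def remove_def)
    next
      case False
      with match(6) show ?thesis
        by (intro anti_subst_remove IH1 assms(3)) simp_all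
    qed
    moreover have "anti_subst (\<lambda>\<Gamma>. mderiv \<Gamma> t2) x u D A bu eu mu fu"
      using match(8) IH2 by (rule anti_subst_mderiv)
    ultimately have "anti_subst (\<lambda>\<Gamma> s b e m f. tderiv \<Gamma> (Sub t1 p t2) s b (e + ep) (m + mp) (f + fp))
        x u (remove G1 p \<and>\<^sub>c D) s (bt + bu) (et + eu) (mt + mu) (ft + fu)"
      by (rule anti_subst_binary)
        (use match(7) in \<open>auto simp: discharge_def intro!: tderiv_mderiv.match\<close>)
    then have "anti_subst (\<lambda>\<Gamma>. tderiv \<Gamma> (Sub t1 p t2)) x u (remove G1 p \<and>\<^sub>c D) s
        (bt + bu + 0) (et + eu + ep) (mt + mu + mp) (ft + fu + fp)"
      by (rule anti_subst_unary) simp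
    with match show ?thesis
      by simp
  qed
qed

lemma anti_subst_tderiv:
  "bv t \<inter> fv u = {} \<Longrightarrow> tderiv G (subst t x u) s b e m f \<Longrightarrow>
   anti_subst (\<lambda>\<Gamma>. tderiv \<Gamma> t) x u G s b e m f"
proof (induction t arbitrary: G s b e m f)
  case (Var y)
  then show ?case
    by (cases "y = x") (simp_all add: anti_subst_var anti_subst_fresh)
next
  case (Lam p t)
  then show ?case
    by (intro anti_subst_Lam[where p = p] Lam.IH) auto
next
  case (App t1 t2)
  then show ?case
    by (intro anti_subst_App App.IH) auto
next
  case (Pair t1 t2)
  then show ?case
    by (intro anti_subst_Pair Pair.IH) auto
next
  case (Sub t1 p t2)
  then show ?case
    by (intro anti_subst_Sub[where p = p] Sub.IH) auto
qed

theorem lemma8: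
  assumes "wf_trm t" and "wf_trm u"
    and "bv t \<inter> fv u = {}"
    and "tderiv G (subst t x u) s b e m f"
  shows "\<exists>Gt Gu A bt bu et eu mt mu ft fu.
           Gt x = {#} \<and>
           tderiv (ctx_ext Gt x A) t s bt et mt ft \<and>
           mderiv Gu u A bu eu mu fu \<and>
           b = bt + bu \<and> e = et + eu \<and> m = mt + mu \<and> f = ft + fu \<and>
           G = Gt \<and>\<^sub>c Gu"
  using anti_subst_tderiv[OF assms(3,4)] unfolding anti_subst_def .

end
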